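(* Assume (A1)–(A4). Then for all $k\ge0$ the vectors produced by Byz-VR-MARINA satisfy $$\frac{1}{G(G-1)}\sum_{i,l\in\mathcal G}\mathbb E\|g_i^{k+1}-g_l^{k+1}\|^2\le A'\,\mathbb E\|x^{k+1}-x^k\|^2+8Bp\,\mathbb E\|\nabla f(x^k)\|^2+4p\zeta^2,$$ where $A'=8BpL^2+4(1-p)\Big(\omega L^2+(1+\omega)L_\pm^2+\frac{(1+\omega)\mathcal L_\pm^2}{b}\Big)$.
   Context: Setting. There are $n$ workers indexed by $[n]=\mathcal G\sqcup\mathcal B$: $\mathcal G$ is the set of good workers, $G=|\mathcal G|\ge2$, and $\mathcal B$ is the set of Byzantine workers with $|\mathcal B|\le\delta n$, $0\le\delta<1/2$. For $i\in\mathcal G$, $f_i(x)=\frac1m\sum_{j=1}^m f_{i,j}(x)$ with differentiable $f_{i,j}:\mathbb R^d\to\mathbb R$, and $f=\frac1G\sum_{i\in\mathcal G}f_i$. All expectations $\mathbb E$ are full expectations. (A1) $f$ is $L$-smooth ($\|\nabla f(x)-\nabla f(y)\|\le L\|x-y\|$ for all $x,y$) and $f_*=\inf_x f(x)>-\infty$. (A2) ($(B,\zeta^2)$-heterogeneity) For some $B,\zeta\ge0$: $\frac1G\sum_{i\in\mathcal G}\|\nabla f_i(x)-\nabla f(x)\|^2\le B\|\nabla f(x)\|^2+\zeta^2$ for all $x$. (A3) (global Hessian variance) For some $L_\pm\ge0$: $\frac1G\sum_{i\in\mathcal G}\|\nabla f_i(x)-\nabla f_i(y)\|^2-\|\nabla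 f(x)-\nabla f(y)\|^2\le L_\pm^2\|x-y\|^2$ for all $x,y$. (A4) (local Hessian variance) There is a batch size $b\ge1$ and, for each $i\in\mathcal G$ and $x,y$, a random vector $\widehat\Delta_i(x,y)$ with $\mathbb E[\widehat\Delta_i(x,y)]=\Delta_i(x,y):=\nabla f_i(x)-\nabla f_i(y)$ and $\frac1G\sum_{i\in\mathcal G}\mathbb E\|\widehat\Delta_i(x,y)-\Delta_i(x,y)\|^2\le\frac{\mathcal L_\pm^2}{b}\|x-y\|^2$ for some $\mathcal L_\pm\ge0$. Compressor: $\mathcal Q:\mathbb R^d\to\mathbb R^d$ is a stochastic map with $\mathbb E[\mathcal Q(x)]=x$ and $\mathbb E\|\mathcal Q(x)-x\|^2\le\omega\|x\|^2$ for all $x$, for some $\omega\ge0$. Algorithm Byz-VR-MARINA with stepsize $\gamma>0$, probability $p\in(0,1]$, start $x^0$, and initial vector $g^0\in\mathbb R^d$ (possibly random). For $k=0,1,2,\dots$: draw $c_k\sim\mathrm{Bernoulli}(p)$ independently of everything else; set $x^{k+1}=x^k-\gamma g^k$; each good worker $i\in\mathcal G$ sets $g_i^{k+1}=\nabla f_i(x^{k+1})$ if $c_k=1$ and $g_i^{k+1}=g^k+\mathcal Q(\widehat\Delta_i(x^{k+1},x^k))$ if $c_k=0$, where, conditionally on the past and on $c_k$, the estimators $\widehat\Delta_i$ and the compressions are sampled freshly and independently across $i\in\mathcal G$ (the compression being applied with fresh randomness to its input); each Byzantine worker $i\in\mathcal B$ sends an arbitrary vector $g_i^{k+1}$ (which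 may depend on everything); finally $g^{k+1}=\mathrm{ARAgg}(g_1^{k+1},\dots,g_n^{k+1})$. *)

theory Defs
  imports "HOL-Probability.Probability"
begin

definition nabla :: "('v::euclidean_space \<Rightarrow> real) \<Rightarrow> 'v \<Rightarrow> 'v" where
  "nabla F x = (THE D. GDERIV F x :> D)"

end

theory Submission
  imports Defs
begin

text \<open>Condition on (x^k, g^k). With probability p every good worker sends its exact gradient
  at x^(k+1); the pairwise spread of these gradients is 2G times their variance around the mean
  gradient, which heterogeneity bounds, and smoothness moves the mean gradient from x^(k+1) back
  to x^k. With probability 1 - p, g_i - g_l is the difference of two independent compressed
  estimators with means D_i = grad f_i(x^(k+1)) - grad f_i(x^k): its second moment is the sum of
  their variances (bounded through omega and the local Hessian variance) plus |D_i - D_l|^2, whose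
  sum over pairs the global Hessian variance bounds.\<close>

lemma nabla_eqI:
  fixes F :: "'v::euclidean_space \<Rightarrow> real"
  assumes "GDERIV F x :> D"
  shows "nabla F x = D"
  unfolding nabla_def
proof (rule the_equality)
  show "GDERIV F x :> D" by fact
  fix D' assume "GDERIV F x :> D'"
  then have "(\<lambda>h. h \<bullet> D') = (\<lambda>h. h \<bullet> D)"
    using assms unfolding gderiv_def by (rule has_derivative_unique)
  then have "(D' - D) \<bullet> D' = (D' - D) \<bullet> D" by metis
  then have "(D' - D) \<bullet> (D' - D) = 0" by (simp add: inner_diff_right)
  then show "D' = D" by simp
qed

lemma has_gderiv_nabla:
  fixes F :: "'v::euclidean_space \<Rightarrow> real"
  assumes "F differentiable (at x)"
  shows "GDERIV F x :> nabla F x"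
proof -
  obtain F' where F': "(F has_derivative F') (at x)"
    using assms unfolding differentiable_def by blast
  have "F' = (\<lambda>h. h \<bullet> adjoint F' 1)"
    using adjoint_works[OF has_derivative_linear[OF F']] by (auto simp: inner_real_def)
  then have "GDERIV F x :> adjoint F' 1"
    using F' unfolding gderiv_def by simp
  then show ?thesis by (simp add: nabla_eqI)
qed

lemma nabla_scaled_sum:
  fixes h :: "'i \<Rightarrow> 'v::euclidean_space \<Rightarrow> real"
  assumes "\<And>i. i \<in> I \<Longrightarrow> h i differentiable (at x)"
  shows "nabla (\<lambda>y. c * (\<Sum>i\<in>I. h i y)) x = c *\<^sub>R (\<Sum>i\<in>I. nabla (h i) x)"
proof (rule nabla_eqI)
  have "((\<lambda>y. \<Sum>i\<in>I. h i y) has_derivative (\<lambda>v. \<Sum>i\<in>I. v \<bullet> nabla (h i) x)) (at x)"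
    using has_gderiv_nabla[OF assms] unfolding gderiv_def by (intro has_derivative_sum) auto
  then have "((\<lambda>y. c * (\<Sum>i\<in>I. h i y)) has_derivative (\<lambda>v. c * (\<Sum>i\<in>I. v \<bullet> nabla (h i) x))) (at x)"
    by (rule has_derivative_mult_right)
  then show "GDERIV (\<lambda>y. c * (\<Sum>i\<in>I. h i y)) x :> c *\<^sub>R (\<Sum>i\<in>I. nabla (h i) x)"
    unfolding gderiv_def by (simp add: inner_sum_right)
qed

lemma sum_nabla_average:
  fixes h :: "'i \<Rightarrow> 'v::euclidean_space \<Rightarrow> real"
  assumes "\<And>i. i \<in> I \<Longrightarrow> h i differentiable (at y)" and "card I \<noteq> 0"
    and F: "\<And>y. F y = (1 / real (card I)) * (\<Sum>i\<in>I. h i y)"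
  shows "(\<Sum>i\<in>I. nabla (h i) y) = real (card I) *\<^sub>R nabla F y"
proof -
  have "F = (\<lambda>y. (1 / real (card I)) * (\<Sum>i\<in>I. h i y))" using F by auto
  then have "nabla F y = (1 / real (card I)) *\<^sub>R (\<Sum>i\<in>I. nabla (h i) y)"
    using nabla_scaled_sum assms(1) by metis
  then show ?thesis using \<open>card I \<noteq> 0\<close> by simp
qed

lemma borel_measurable_lipschitz:
  fixes F :: "'a::real_normed_vector \<Rightarrow> 'b::real_normed_vector"
  assumes "\<And>y z. norm (F y - F z) \<le> L * norm (y - z)"
  shows "F \<in> borel_measurable borel"
proof (rule borel_measurable_continuous_onI, rule lipschitz_on_continuous_on)
  show "\<bar>L\<bar>-lipschitz_on UNIV F"
  proof (rule lipschitz_onI)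
    fix y z :: 'a
    have "norm (F y - F z) \<le> \<bar>L\<bar> * norm (y - z)"
      using assms[of y z] by (smt (verit) abs_ge_self mult_right_mono norm_ge_zero)
    then show "dist (F y) (F z) \<le> \<bar>L\<bar> * dist y z" by (simp add: dist_norm)
  qed simp
qed

lemma measurable_PiM_kernel:
  assumes K: "\<And>i. i \<in> I \<Longrightarrow> K i \<in> N \<rightarrow>\<^sub>M prob_algebra (A i)"
  shows "(\<lambda>s. PiM I (\<lambda>i. K i s)) \<in> N \<rightarrow>\<^sub>M prob_algebra (PiM I A)"
proof (rule measurable_prob_algebra_generated[OF sets_PiM Int_stable_prod_algebra prod_algebra_sets_into_space])
  fix s assume s: "s \<in> space N"
  have Ks: "i \<in> I \<Longrightarrow> prob_space (K i s) \<and> sets (K i s) = sets (A i)" for i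
    using measurable_space[OF K s] by (auto simp: space_prob_algebra)
  show "prob_space (PiM I (\<lambda>i. K i s))"
    using Ks by (intro prob_space_PiM) auto
  show "sets (PiM I (\<lambda>i. K i s)) = sets (PiM I A)"
    using Ks by (intro sets_PiM_cong) auto
next
  fix X assume "X \<in> prod_algebra I A"
  then obtain J E where X: "X = prod_emb I A J (\<Pi>\<^sub>E j\<in>J. E j)"
    "finite J" "J \<subseteq> I" "\<And>i. i \<in> J \<Longrightarrow> E i \<in> sets (A i)"
    by (rule prod_algebraE) blast
  have "(\<lambda>s. \<Prod>j\<in>J. emeasure (K j s) (E j)) \<in> borel_measurable N"
    using measurable_prob_algebraD[OF K] X
    by (intro borel_measurable_prod_ennreal measurable_emeasure_kernel) auto
  moreover have "emeasure (PiM I (\<lambda>i. K i s)) X = (\<Prod>j\<in>J. emeasure (K j s) (E j))"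
    if s: "s \<in> space N" for s
  proof -
    have Ks: "i \<in> I \<Longrightarrow> prob_space (K i s) \<and> sets (K i s) = sets (A i)" for i
      using measurable_space[OF K s] by (auto simp: space_prob_algebra)
    then have "i \<in> I \<Longrightarrow> space (K i s) = space (A i)" for i
      by (metis sets_eq_imp_space_eq)
    then have "X = prod_emb I (\<lambda>i. K i s) J (\<Pi>\<^sub>E j\<in>J. E j)"
      unfolding X(1) prod_emb_def by (auto simp: PiE_iff)
    then show ?thesis using X Ks
      by (simp add: emeasure_PiM_emb subset_iff)
  qed
  ultimately show "(\<lambda>s. emeasure (PiM I (\<lambda>i. K i s)) X) \<in> borel_measurable N"
    by (subst measurable_cong) auto
qed

lemma distr_PiM_pair:
  assumes M: "\<And>i. i \<in> I \<Longrightarrow> prob_space (M i)"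
    and "i \<in> I" "l \<in> I" "i \<noteq> l"
  shows "distr (PiM I M) (M i \<Otimes>\<^sub>M M l) (\<lambda>q. (q i, q l)) = M i \<Otimes>\<^sub>M M l"
proof (rule pair_measure_eqI[symmetric])
  interpret Mi: prob_space "M i" using M assms by auto
  interpret Ml: prob_space "M l" using M assms by auto
  show "sigma_finite_measure (M i)" "sigma_finite_measure (M l)" by unfold_locales
  show "sets (M i \<Otimes>\<^sub>M M l) = sets (distr (PiM I M) (M i \<Otimes>\<^sub>M M l) (\<lambda>q. (q i, q l)))" by simp
  fix A B assume A: "A \<in> sets (M i)" and B: "B \<in> sets (M l)"
  have meas: "(\<lambda>q. (q i, q l)) \<in> PiM I M \<rightarrow>\<^sub>M M i \<Otimes>\<^sub>M M l"
    using assms by measurable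
  define E where "E = (\<lambda>j. if j = i then A else B)"
  have "(\<lambda>q. (q i, q l)) -` (A \<times> B) \<inter> space (PiM I M) = prod_emb I M {i, l} (\<Pi>\<^sub>E j\<in>{i,l}. E j)"
    using assms by (auto simp: prod_emb_def space_PiM E_def PiE_iff)
  then have "emeasure (distr (PiM I M) (M i \<Otimes>\<^sub>M M l) (\<lambda>q. (q i, q l))) (A \<times> B)
      = emeasure (PiM I M) (prod_emb I M {i, l} (\<Pi>\<^sub>E j\<in>{i,l}. E j))"
    using A B meas by (simp add: emeasure_distr)
  also have "\<dots> = (\<Prod>j\<in>{i,l}. emeasure (M j) (E j))"
    using assms A B by (intro emeasure_PiM_emb M) (auto simp: E_def)
  also have "\<dots> = emeasure (M i) A * emeasure (M l) B"
    using assms by (simp add: E_def)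
  finally show "emeasure (M i) A * emeasure (M l) B
      = emeasure (distr (PiM I M) (M i \<Otimes>\<^sub>M M l) (\<lambda>q. (q i, q l))) (A \<times> B)"
    by simp
qed

definition mean_sq_dist :: "'v::real_normed_vector measure \<Rightarrow> 'v \<Rightarrow> ennreal" where
  "mean_sq_dist \<nu> a = (\<integral>\<^sup>+v. ennreal ((norm (v - a))\<^sup>2) \<partial>\<nu>)"

lemma power2_norm_diff_split:
  fixes v m a :: "'v::real_inner"
  shows "(norm (v - a))\<^sup>2 = (norm (v - m))\<^sup>2 + 2 * ((v - m) \<bullet> (m - a)) + (norm (m - a))\<^sup>2"
proof -
  have "(norm (x + y))\<^sup>2 = (norm x)\<^sup>2 + 2 * (x \<bullet> y) + (norm y)\<^sup>2" for x y :: 'v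
    by (simp add: power2_norm_eq_inner inner_add_left inner_add_right inner_commute[of y x])
  moreover have "v - a = (v - m) + (m - a)" by simp
  ultimately show ?thesis by metis
qed

lemma mean_sq_dist_bias_variance:
  fixes \<nu> :: "'v::euclidean_space measure"
  assumes "prob_space \<nu>" and S: "sets \<nu> = sets borel"
    and I: "integrable \<nu> (\<lambda>v. v)" and m: "(\<integral>v. v \<partial>\<nu>) = m"
    and F: "mean_sq_dist \<nu> m < \<infinity>"
  shows "mean_sq_dist \<nu> a = mean_sq_dist \<nu> m + ennreal ((norm (m - a))\<^sup>2)"
proof -
  interpret prob_space \<nu> by fact
  note S[measurable_cong]
  have ih: "integrable \<nu> (\<lambda>v. (norm (v - m))\<^sup>2)"
    using F unfolding mean_sq_dist_def by (subst integrable_iff_bounded) auto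
  have il: "integrable \<nu> (\<lambda>v. (v - m) \<bullet> (m - a))"
    using I by (intro integrable_inner_left integrable_diff) auto
  have cross: "(\<integral>v. (v - m) \<bullet> (m - a) \<partial>\<nu>) = 0"
    using I m by (simp add: prob_space)
  have ia: "integrable \<nu> (\<lambda>v. (norm (v - a))\<^sup>2)"
    using ih il by (subst power2_norm_diff_split[of _ a m]) auto
  have "(\<integral>v. (norm (v - a))\<^sup>2 \<partial>\<nu>) = (\<integral>v. (norm (v - m))\<^sup>2 \<partial>\<nu>) + (norm (m - a))\<^sup>2"
    using ih il cross by (subst power2_norm_diff_split[of _ a m]) (simp add: prob_space)
  moreover have "mean_sq_dist \<nu> b = ennreal (\<integral>v. (norm (v - b))\<^sup>2 \<partial>\<nu>)"
    if "integrable \<nu> (\<lambda>v. (norm (v - b))\<^sup>2)" for b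
    unfolding mean_sq_dist_def using that by (intro nn_integral_eq_integral) auto
  ultimately show ?thesis
    using ih ia by (simp add: ennreal_plus integral_nonneg_AE)
qed

lemma mean_sq_dist_bind:
  fixes D :: "'v::euclidean_space measure" and Qd :: "'v \<Rightarrow> 'v measure"
  assumes SD: "sets D = sets borel"
    and Qm: "Qd \<in> borel \<rightarrow>\<^sub>M prob_algebra borel"
    and QI: "\<And>u. integrable (Qd u) (\<lambda>v. v)" and Qmean: "\<And>u. (\<integral>v. v \<partial>Qd u) = u"
    and Qfin: "\<And>u. mean_sq_dist (Qd u) u < \<infinity>"
  shows "mean_sq_dist (D \<bind> Qd) a = (\<integral>\<^sup>+u. mean_sq_dist (Qd u) u \<partial>D) + mean_sq_dist D a"
proof -
  note SD[measurable_cong]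
  have QmD: "Qd \<in> D \<rightarrow>\<^sub>M subprob_algebra borel"
    using measurable_prob_algebraD[OF Qm] by (simp cong: measurable_cong_sets)
  have [measurable]: "(\<lambda>u. mean_sq_dist (Qd u) u) \<in> borel_measurable D"
    unfolding mean_sq_dist_def
    by (rule nn_integral_measurable_subprob_algebra2[OF _ QmD]) measurable
  have Qa: "mean_sq_dist (Qd u) a = mean_sq_dist (Qd u) u + ennreal ((norm (u - a))\<^sup>2)" for u
    using measurable_space[OF Qm, of u] QI Qmean Qfin
    by (intro mean_sq_dist_bias_variance) (auto simp: space_prob_algebra)
  have "mean_sq_dist (D \<bind> Qd) a = (\<integral>\<^sup>+u. mean_sq_dist (Qd u) a \<partial>D)"
    unfolding mean_sq_dist_def by (rule nn_integral_bind[OF _ QmD]) measurable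
  also have "\<dots> = (\<integral>\<^sup>+u. mean_sq_dist (Qd u) u + ennreal ((norm (u - a))\<^sup>2) \<partial>D)"
    by (simp add: Qa)
  also have "\<dots> = (\<integral>\<^sup>+u. mean_sq_dist (Qd u) u \<partial>D) + mean_sq_dist D a"
    unfolding mean_sq_dist_def[of D] by (rule nn_integral_add) measurable
  finally show ?thesis .
qed

text \<open>The variance C of the compressed estimator is returned as a witness; this avoids proving
  that \<open>D \<bind> Qd\<close> is integrable.\<close>

lemma mean_sq_dist_compressed:
  fixes D :: "'v::euclidean_space measure" and Qd :: "'v \<Rightarrow> 'v measure"
  assumes "prob_space D" and SD: "sets D = sets borel" and "integrable D (\<lambda>v. v)"
    and "(\<integral>v. v \<partial>D) = \<Delta>" and W: "mean_sq_dist D \<Delta> = ennreal W" "0 \<le> W"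
    and Qm: "Qd \<in> borel \<rightarrow>\<^sub>M prob_algebra borel"
    and QI: "\<And>u. integrable (Qd u) (\<lambda>v. v)" and Qmean: "\<And>u. (\<integral>v. v \<partial>Qd u) = u"
    and Qvar: "\<And>u. mean_sq_dist (Qd u) u \<le> ennreal (\<omega> * (norm u)\<^sup>2)" and "0 \<le> \<omega>"
  shows "\<exists>C. 0 \<le> C \<and> C \<le> (1 + \<omega>) * W + \<omega> * (norm \<Delta>)\<^sup>2 \<and>
           (\<forall>a. mean_sq_dist (D \<bind> Qd) a = ennreal (C + (norm (\<Delta> - a))\<^sup>2))"
proof -
  note SD[measurable_cong]
  have Dsq: "mean_sq_dist D a = ennreal (W + (norm (\<Delta> - a))\<^sup>2)" for a
    using mean_sq_dist_bias_variance[OF assms(1-4)] W by (simp add: ennreal_plus)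
  define V where "V = (\<integral>\<^sup>+u. mean_sq_dist (Qd u) u \<partial>D)"
  have "V \<le> (\<integral>\<^sup>+u. ennreal \<omega> * ennreal ((norm (u - 0))\<^sup>2) \<partial>D)"
    unfolding V_def using Qvar \<open>0 \<le> \<omega>\<close> by (intro nn_integral_mono) (simp add: ennreal_mult)
  also have "\<dots> = ennreal \<omega> * mean_sq_dist D 0"
    unfolding mean_sq_dist_def by (rule nn_integral_cmult) measurable
  also have "\<dots> = ennreal (\<omega> * (W + (norm \<Delta>)\<^sup>2))"
    using Dsq \<open>0 \<le> \<omega>\<close> W(2) by (simp add: ennreal_mult)
  finally have V_le: "V \<le> ennreal (\<omega> * (W + (norm \<Delta>)\<^sup>2))" .
  then have V_eq: "V = ennreal (enn2real V)"
    by (metis ennreal_enn2real ennreal_less_top le_less_trans)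
  have "enn2real V \<le> \<omega> * (W + (norm \<Delta>)\<^sup>2)"
    using V_le \<open>0 \<le> \<omega>\<close> W(2) by (metis V_eq ennreal_le_iff add_nonneg_nonneg mult_nonneg_nonneg zero_le_power2)
  moreover have "mean_sq_dist (D \<bind> Qd) a = ennreal (enn2real V + W + (norm (\<Delta> - a))\<^sup>2)" for a
  proof -
    have Qfin: "mean_sq_dist (Qd u) u < \<infinity>" for u
      using Qvar[of u] by (simp add: le_less_trans)
    have "mean_sq_dist (D \<bind> Qd) a = V + mean_sq_dist D a"
      unfolding V_def using SD Qm QI Qmean Qfin by (rule mean_sq_dist_bind)
    also have "\<dots> = ennreal (enn2real V) + ennreal (W + (norm (\<Delta> - a))\<^sup>2)"
      using V_eq Dsq by simp
    also have "\<dots> = ennreal (enn2real V + W + (norm (\<Delta> - a))\<^sup>2)"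
      using W(2) by (simp add: ennreal_plus add.assoc)
    finally show ?thesis .
  qed
  ultimately show ?thesis
    using W(2) by (intro exI[of _ "enn2real V + W"]) (auto simp: algebra_simps)
qed

lemma sum_pairwise_mean_sq_dist_PiM:
  fixes \<mu> :: "'i \<Rightarrow> 'v::euclidean_space measure"
  assumes P: "\<And>i. i \<in> I \<Longrightarrow> prob_space (\<mu> i)" and S: "\<And>i. i \<in> I \<Longrightarrow> sets (\<mu> i) = sets borel"
    and C: "\<And>i. i \<in> I \<Longrightarrow> 0 \<le> C i"
    and moments: "\<And>i a. i \<in> I \<Longrightarrow> mean_sq_dist (\<mu> i) a = ennreal (C i + (norm (\<Delta> i - a))\<^sup>2)"
  shows "(\<Sum>i\<in>I. \<Sum>l\<in>I. \<integral>\<^sup>+q. ennreal ((norm (q i - q l))\<^sup>2) \<partial>PiM I \<mu>)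
       = ennreal (\<Sum>i\<in>I. \<Sum>l\<in>I. if i = l then 0 else C i + C l + (norm (\<Delta> i - \<Delta> l))\<^sup>2)"
proof -
  have pair: "(\<integral>\<^sup>+q. ennreal ((norm (q i - q l))\<^sup>2) \<partial>PiM I \<mu>)
      = ennreal (C i + C l + (norm (\<Delta> i - \<Delta> l))\<^sup>2)"
    if il: "i \<in> I" "l \<in> I" "i \<noteq> l" for i l
  proof -
    interpret Mi: prob_space "\<mu> i" using P il by auto
    interpret Ml: prob_space "\<mu> l" using P il by auto
    interpret pair_sigma_finite "\<mu> i" "\<mu> l" ..
    note S[OF il(1), measurable_cong] S[OF il(2), measurable_cong]
    have meas: "(\<lambda>q. (q i, q l)) \<in> PiM I \<mu> \<rightarrow>\<^sub>M \<mu> i \<Otimes>\<^sub>M \<mu> l" using il by measurable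
    have inner: "mean_sq_dist (\<mu> l) u = ennreal (C l) + ennreal ((norm (u - \<Delta> l))\<^sup>2)" for u
    proof -
      have "mean_sq_dist (\<mu> l) u = ennreal (C l + (norm (u - \<Delta> l))\<^sup>2)"
        using moments[OF il(2)] by (simp add: norm_minus_commute)
      then show ?thesis using C[OF il(2)] by (simp add: ennreal_plus)
    qed
    have "(\<integral>\<^sup>+q. ennreal ((norm (q i - q l))\<^sup>2) \<partial>PiM I \<mu>)
        = (\<integral>\<^sup>+z. ennreal ((norm (fst z - snd z))\<^sup>2) \<partial>distr (PiM I \<mu>) (\<mu> i \<Otimes>\<^sub>M \<mu> l) (\<lambda>q. (q i, q l)))"
      by (subst nn_integral_distr[OF meas]) simp_all
    also have "\<dots> = (\<integral>\<^sup>+z. ennreal ((norm (fst z - snd z))\<^sup>2) \<partial>(\<mu> i \<Otimes>\<^sub>M \<mu> l))"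
      using distr_PiM_pair[of I \<mu> i l] P il by simp
    also have "\<dots> = (\<integral>\<^sup>+u. mean_sq_dist (\<mu> l) u \<partial>\<mu> i)"
    proof -
      have "(\<integral>\<^sup>+z. ennreal ((norm (fst z - snd z))\<^sup>2) \<partial>(\<mu> i \<Otimes>\<^sub>M \<mu> l))
          = (\<integral>\<^sup>+u. \<integral>\<^sup>+v. ennreal ((norm (u - v))\<^sup>2) \<partial>\<mu> l \<partial>\<mu> i)"
        by (subst Ml.nn_integral_fst[symmetric]) simp_all
      then show ?thesis unfolding mean_sq_dist_def by (simp add: norm_minus_commute)
    qed
    also have "\<dots> = ennreal (C l) + mean_sq_dist (\<mu> i) (\<Delta> l)"
      unfolding inner mean_sq_dist_def[of "\<mu> i"]
      by (subst nn_integral_add) (simp_all add: Mi.emeasure_space_1)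
    also have "\<dots> = ennreal (C l) + ennreal (C i + (norm (\<Delta> i - \<Delta> l))\<^sup>2)"
      using moments[OF il(1)] by simp
    also have "\<dots> = ennreal (C i + C l + (norm (\<Delta> i - \<Delta> l))\<^sup>2)"
      using C il by (subst ennreal_plus[symmetric]) (auto simp: add_ac)
    finally show ?thesis .
  qed
  have "(\<Sum>i\<in>I. \<Sum>l\<in>I. \<integral>\<^sup>+q. ennreal ((norm (q i - q l))\<^sup>2) \<partial>PiM I \<mu>)
      = (\<Sum>i\<in>I. \<Sum>l\<in>I. ennreal (if i = l then 0 else C i + C l + (norm (\<Delta> i - \<Delta> l))\<^sup>2))"
    using pair by (intro sum.cong) auto
  also have "\<dots> = ennreal (\<Sum>i\<in>I. \<Sum>l\<in>I. if i = l then 0 else C i + C l + (norm (\<Delta> i - \<Delta> l))\<^sup>2)"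
    using C by (simp add: sum_nonneg)
  finally show ?thesis .
qed

lemma sum_pairwise_norm_diff_sq:
  fixes a :: "'i \<Rightarrow> 'v::real_inner"
  shows "(\<Sum>i\<in>I. \<Sum>l\<in>I. (norm (a i - a l))\<^sup>2)
       = 2 * real (card I) * (\<Sum>i\<in>I. (norm (a i))\<^sup>2) - 2 * (norm (\<Sum>i\<in>I. a i))\<^sup>2"
proof -
  have e: "(norm (a i - a l))\<^sup>2 = (norm (a i))\<^sup>2 + (norm (a l))\<^sup>2 - 2 * (a i \<bullet> a l)" for i l
    by (simp add: power2_norm_eq_inner inner_diff_left inner_diff_right inner_commute[of "a l" "a i"])
  have s: "(\<Sum>i\<in>I. \<Sum>l\<in>I. a i \<bullet> a l) = (norm (\<Sum>i\<in>I. a i))\<^sup>2"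
    by (simp add: power2_norm_eq_inner inner_sum_left inner_sum_right) (rule sum.swap)
  have "(\<Sum>i\<in>I. \<Sum>l\<in>I. (norm (a i - a l))\<^sup>2)
      = (\<Sum>i\<in>I. \<Sum>l\<in>I. (norm (a i))\<^sup>2) + (\<Sum>i\<in>I. \<Sum>l\<in>I. (norm (a l))\<^sup>2) - 2 * (\<Sum>i\<in>I. \<Sum>l\<in>I. a i \<bullet> a l)"
    unfolding e by (simp add: sum.distrib sum_subtractf sum_distrib_left)
  also have "\<dots> = 2 * real (card I) * (\<Sum>i\<in>I. (norm (a i))\<^sup>2) - 2 * (norm (\<Sum>i\<in>I. a i))\<^sup>2"
    unfolding s by (simp add: sum_distrib_left[symmetric] mult.commute)
  finally show ?thesis .
qed

lemma sum_pairwise_norm_diff_sq_centered: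
  fixes a :: "'i \<Rightarrow> 'v::real_inner"
  assumes "(\<Sum>i\<in>I. a i) = real (card I) *\<^sub>R m"
  shows "(\<Sum>i\<in>I. \<Sum>l\<in>I. (norm (a i - a l))\<^sup>2) = 2 * real (card I) * (\<Sum>i\<in>I. (norm (a i - m))\<^sup>2)"
proof -
  have "(\<Sum>i\<in>I. a i - m) = 0"
    using assms by (simp add: sum_subtractf sum_constant_scaleR)
  then show ?thesis
    using sum_pairwise_norm_diff_sq[of "\<lambda>i. a i - m" I] by simp
qed

lemma sum_offdiag_pairs:
  fixes Y :: "'i \<Rightarrow> real"
  assumes "finite I" and z: "\<And>i. z i i = 0"
  shows "(\<Sum>i\<in>I. \<Sum>l\<in>I. if i = l then 0 else Y i + Y l + z i l)
       = 2 * (real (card I) - 1) * (\<Sum>i\<in>I. Y i) + (\<Sum>i\<in>I. \<Sum>l\<in>I. z i l)"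
proof -
  have e: "(if i = l then 0 else Y i + Y l + z i l) = (Y i + (Y l + z i l)) - (if i = l then 2 * Y i else 0)" for i l
    using z by auto
  have d: "(\<Sum>l\<in>I. if i = l then 2 * Y i else 0) = (if i \<in> I then 2 * Y i else 0)" for i
    using \<open>finite I\<close> by (simp add: sum.delta)
  have "(\<Sum>i\<in>I. \<Sum>l\<in>I. if i = l then 0 else Y i + Y l + z i l)
      = (\<Sum>i\<in>I. real (card I) * Y i + ((\<Sum>l\<in>I. Y l) + (\<Sum>l\<in>I. z i l)) - 2 * Y i)"
    unfolding e sum_subtractf d sum.distrib by (simp cong: sum.cong)
  also have "\<dots> = real (card I) * (\<Sum>i\<in>I. Y i) + (real (card I) * (\<Sum>i\<in>I. Y i)
      + (\<Sum>i\<in>I. \<Sum>l\<in>I. z i l)) - 2 * (\<Sum>i\<in>I. Y i)"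
    unfolding sum_subtractf sum.distrib sum_distrib_left by (simp add: sum_distrib_left)
  also have "\<dots> = 2 * (real (card I) - 1) * (\<Sum>i\<in>I. Y i) + (\<Sum>i\<in>I. \<Sum>l\<in>I. z i l)"
    by (simp add: algebra_simps)
  finally show ?thesis .
qed

lemma sum_pairwise_heterogeneity_le:
  fixes a :: "'i \<Rightarrow> 'v::real_inner"
  assumes "finite I" "I \<noteq> {}"
    and mean: "(\<Sum>i\<in>I. a i) = real (card I) *\<^sub>R m"
    and het: "(1 / real (card I)) * (\<Sum>i\<in>I. (norm (a i - m))\<^sup>2) \<le> B * (norm m)\<^sup>2 + \<zeta>\<^sup>2"
    and "0 \<le> B"
    and lip: "norm (m - m') \<le> L * d"
  shows "(\<Sum>i\<in>I. \<Sum>l\<in>I. (norm (a i - a l))\<^sup>2)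
       \<le> 2 * (real (card I))\<^sup>2 * (2 * B * (norm m')\<^sup>2 + 2 * B * L\<^sup>2 * d\<^sup>2 + \<zeta>\<^sup>2)"
proof -
  define G where "G = real (card I)"
  have "G > 0" using assms(1,2) by (simp add: G_def card_gt_0_iff)
  have "(norm (m - m'))\<^sup>2 \<le> (L * d)\<^sup>2"
    using lip by (intro power_mono) auto
  moreover have "(norm m)\<^sup>2 \<le> 2 * (norm m')\<^sup>2 + 2 * (norm (m - m'))\<^sup>2"
  proof -
    have "norm m \<le> norm m' + norm (m - m')"
      by (metis add.commute diff_add_cancel norm_triangle_ineq)
    then have "(norm m)\<^sup>2 \<le> (norm m' + norm (m - m'))\<^sup>2"
      by (intro power_mono) auto
    then show ?thesis
      by (smt (verit, best) sum_squares_bound zero_le_power2 power2_sum)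
  qed
  ultimately have "B * (norm m)\<^sup>2 \<le> B * (2 * (norm m')\<^sup>2 + 2 * L\<^sup>2 * d\<^sup>2)"
    using \<open>0 \<le> B\<close> by (intro mult_left_mono) (auto simp: power_mult_distrib)
  moreover have "(\<Sum>i\<in>I. (norm (a i - m))\<^sup>2) \<le> G * (B * (norm m)\<^sup>2 + \<zeta>\<^sup>2)"
    using het \<open>G > 0\<close> by (simp add: G_def field_simps)
  ultimately have "(\<Sum>i\<in>I. (norm (a i - m))\<^sup>2) \<le> G * (B * (2 * (norm m')\<^sup>2 + 2 * L\<^sup>2 * d\<^sup>2) + \<zeta>\<^sup>2)"
    using \<open>G > 0\<close> by (smt (verit) mult_left_mono)
  then have "2 * G * (\<Sum>i\<in>I. (norm (a i - m))\<^sup>2) \<le> 2 * G * (G * (B * (2 * (norm m')\<^sup>2 + 2 * L\<^sup>2 * d\<^sup>2) + \<zeta>\<^sup>2))"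
    using \<open>G > 0\<close> by (intro mult_left_mono) auto
  then show ?thesis
    unfolding sum_pairwise_norm_diff_sq_centered[OF mean]
    by (simp add: G_def algebra_simps power2_eq_square)
qed

lemma ennreal_average_le_realE:
  fixes X :: "'i \<Rightarrow> ennreal"
  assumes "finite I" "I \<noteq> {}" "0 \<le> r"
    and avg: "ennreal (1 / real (card I)) * (\<Sum>i\<in>I. X i) \<le> ennreal r"
  obtains W where "\<And>i. i \<in> I \<Longrightarrow> X i = ennreal (W i)" "\<And>i. 0 \<le> W i"
    "(\<Sum>i\<in>I. W i) \<le> real (card I) * r"
proof
  have G: "real (card I) > 0" using assms(1,2) by (simp add: card_gt_0_iff)
  have "(\<Sum>i\<in>I. X i) = ennreal (real (card I)) * (ennreal (1 / real (card I)) * (\<Sum>i\<in>I. X i))"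
    using G by (simp add: mult.assoc[symmetric] ennreal_mult[symmetric])
  also have "\<dots> \<le> ennreal (real (card I)) * ennreal r"
    using avg by (rule mult_left_mono) simp
  also have "\<dots> = ennreal (real (card I) * r)"
    using \<open>0 \<le> r\<close> by (simp add: ennreal_mult)
  finally have sum_le: "(\<Sum>i\<in>I. X i) \<le> ennreal (real (card I) * r)" .
  have fin: "X i < \<infinity>" if "i \<in> I" for i
  proof -
    have "X i \<le> (\<Sum>i\<in>I. X i)"
      using that \<open>finite I\<close> by (intro member_le_sum) auto
    also note sum_le
    also have "ennreal (real (card I) * r) < \<infinity>" by simp
    finally show ?thesis .
  qed
  show X: "X i = ennreal (enn2real (X i))" if "i \<in> I" for i
    using fin[OF that] by (simp add: less_top)
  show "0 \<le> enn2real (X i)" for i by simp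
  have "(\<Sum>i\<in>I. X i) = (\<Sum>i\<in>I. ennreal (enn2real (X i)))"
    by (rule sum.cong[OF refl X])
  then have "ennreal (\<Sum>i\<in>I. enn2real (X i)) = (\<Sum>i\<in>I. X i)"
    by simp
  then have "ennreal (\<Sum>i\<in>I. enn2real (X i)) \<le> ennreal (real (card I) * r)"
    using sum_le by simp
  then show "(\<Sum>i\<in>I. enn2real (X i)) \<le> real (card I) * r"
    using \<open>0 \<le> r\<close> by (simp add: ennreal_le_iff)
qed

text \<open>In the application S is the sum of the squared means, Db2 the squared norm of their
  average, and SC, SW the summed variances of the compressed and raw estimators.\<close>

lemma pairwise_compression_bound_arith:
  fixes g w L2 P2 c2 d2 S Db2 SC SW :: real
  assumes g: "g \<ge> 2" and w: "w \<ge> 0" and c2: "c2 \<ge> 0" and d2: "d2 \<ge> 0" and L2: "L2 \<ge> 0" and P2: "P2 \<ge> 0"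
    and SC: "SC \<le> (1 + w) * SW + w * S" and SW: "SW \<le> g * c2 * d2"
    and hess: "(1 / g) * S - Db2 \<le> P2 * d2" and smooth: "Db2 \<le> L2 * d2"
  shows "2 * (g - 1) * SC + 2 * g * S - 2 * g\<^sup>2 * Db2
       \<le> g * (g - 1) * (4 * (w * L2 + (1 + w) * P2 + (1 + w) * c2)) * d2"
proof -
  define X where "X = S - g * Db2"
  have "g * ((1 / g) * S - Db2) \<le> g * (P2 * d2)" using hess g by (intro mult_left_mono) auto
  then have X: "X \<le> g * P2 * d2" unfolding X_def using g by (simp add: algebra_simps)
  have S: "S = X + g * Db2" unfolding X_def by simp
  have "2 * (g - 1) * SC \<le> 2 * (g - 1) * ((1 + w) * (g * c2 * d2) + w * S)"
    using SC SW g w by (smt (verit, best) mult_left_mono)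
  moreover have "2 * (g - 1) * ((1 + w) * (g * c2 * d2) + w * S) + 2 * g * S - 2 * g\<^sup>2 * Db2
       = 2 * (g - 1) * (1 + w) * g * c2 * d2 + (2 * (g - 1) * w * g) * Db2 + (2 * (g - 1) * w + 2 * g) * X"
    unfolding S by (simp add: algebra_simps power2_eq_square)
  moreover have "(2 * (g - 1) * w * g) * Db2 \<le> (2 * (g - 1) * w * g) * (L2 * d2)"
    using smooth g w by (intro mult_left_mono) auto
  moreover have "(2 * (g - 1) * w + 2 * g) * X \<le> (2 * (g - 1) * w + 2 * g) * (g * P2 * d2)"
    using X g w by (intro mult_left_mono) auto
  moreover have "g * (g - 1) * (4 * (w * L2 + (1 + w) * P2 + (1 + w) * c2)) * d2
      - (2 * (g - 1) * (1 + w) * g * c2 * d2 + (2 * (g - 1) * w * g) * (L2 * d2)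
         + (2 * (g - 1) * w + 2 * g) * (g * P2 * d2))
      = 2 * g * (g - 1) * (1 + w) * c2 * d2 + 2 * g * (g - 1) * w * L2 * d2
        + (2 * g * (g - 2) + 2 * g * (g - 1) * w) * P2 * d2"
    by (simp add: algebra_simps power2_eq_square)
  moreover have "0 \<le> 2 * g * (g - 1) * (1 + w) * c2 * d2 + 2 * g * (g - 1) * w * L2 * d2
        + (2 * g * (g - 2) + 2 * g * (g - 1) * w) * P2 * d2"
    using g w c2 d2 L2 P2 by (intro add_nonneg_nonneg mult_nonneg_nonneg) auto
  ultimately show ?thesis by linarith
qed

lemma sum_pairwise_compressed_estimates_le:
  fixes Est :: "'i \<Rightarrow> 'v::euclidean_space measure" and Qd :: "'v \<Rightarrow> 'v measure"
    and \<Delta> :: "'i \<Rightarrow> 'v"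
  assumes fin: "finite I" and two: "card I \<ge> 2"
    and Est_prob: "\<And>i. i \<in> I \<Longrightarrow> prob_space (Est i)"
    and Est_sets: "\<And>i. i \<in> I \<Longrightarrow> sets (Est i) = sets borel"
    and Est_int: "\<And>i. i \<in> I \<Longrightarrow> integrable (Est i) (\<lambda>v. v)"
    and Est_mean: "\<And>i. i \<in> I \<Longrightarrow> (\<integral>v. v \<partial>Est i) = \<Delta> i"
    and Est_var: "ennreal (1 / real (card I)) * (\<Sum>i\<in>I. mean_sq_dist (Est i) (\<Delta> i)) \<le> ennreal (\<sigma>2 * d2)"
    and mean: "(\<Sum>i\<in>I. \<Delta> i) = real (card I) *\<^sub>R \<delta>"
    and smooth: "(norm \<delta>)\<^sup>2 \<le> L2 * d2"
    and hess: "(1 / real (card I)) * (\<Sum>i\<in>I. (norm (\<Delta> i))\<^sup>2) - (norm \<delta>)\<^sup>2 \<le> P2 * d2"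
    and Qm: "Qd \<in> borel \<rightarrow>\<^sub>M prob_algebra borel"
    and QI: "\<And>u. integrable (Qd u) (\<lambda>v. v)" and Qmean: "\<And>u. (\<integral>v. v \<partial>Qd u) = u"
    and Qvar: "\<And>u. mean_sq_dist (Qd u) u \<le> ennreal (\<omega> * (norm u)\<^sup>2)"
    and nonneg: "0 \<le> \<omega>" "0 \<le> \<sigma>2" "0 \<le> d2" "0 \<le> L2" "0 \<le> P2"
  shows "(\<Sum>i\<in>I. \<Sum>l\<in>I. \<integral>\<^sup>+q. ennreal ((norm (q i - q l))\<^sup>2) \<partial>PiM I (\<lambda>i. Est i \<bind> Qd))
       \<le> ennreal (real (card I) * (real (card I) - 1)
                  * (4 * (\<omega> * L2 + (1 + \<omega>) * P2 + (1 + \<omega>) * \<sigma>2)) * d2)"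
proof -
  define G where "G = real (card I)"
  have "I \<noteq> {}" using two by auto
  obtain W where W: "\<And>i. i \<in> I \<Longrightarrow> mean_sq_dist (Est i) (\<Delta> i) = ennreal (W i)" "\<And>i. 0 \<le> W i"
    and SW: "(\<Sum>i\<in>I. W i) \<le> G * (\<sigma>2 * d2)"
    using ennreal_average_le_realE[OF fin \<open>I \<noteq> {}\<close> _ Est_var] nonneg unfolding G_def by auto
  have "\<exists>C. 0 \<le> C \<and> C \<le> (1 + \<omega>) * W i + \<omega> * (norm (\<Delta> i))\<^sup>2 \<and>
          (\<forall>a. mean_sq_dist (Est i \<bind> Qd) a = ennreal (C + (norm (\<Delta> i - a))\<^sup>2))" if "i \<in> I" for i
    using Est_prob Est_sets Est_int Est_mean W Qm QI Qmean Qvar nonneg that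
    by (intro mean_sq_dist_compressed) auto
  then obtain C where C: "\<And>i. i \<in> I \<Longrightarrow> 0 \<le> C i"
      "\<And>i. i \<in> I \<Longrightarrow> C i \<le> (1 + \<omega>) * W i + \<omega> * (norm (\<Delta> i))\<^sup>2"
      "\<And>i a. i \<in> I \<Longrightarrow> mean_sq_dist (Est i \<bind> Qd) a = ennreal (C i + (norm (\<Delta> i - a))\<^sup>2)"
    by metis
  have law: "prob_space (Est i \<bind> Qd) \<and> sets (Est i \<bind> Qd) = sets borel" if "i \<in> I" for i
  proof -
    have "Est i \<in> space (prob_algebra borel)"
      using Est_prob Est_sets that by (simp add: space_prob_algebra)
    then show ?thesis using prob_space_bind' sets_bind' Qm by blast
  qed
  have "(\<Sum>i\<in>I. \<Sum>l\<in>I. \<integral>\<^sup>+q. ennreal ((norm (q i - q l))\<^sup>2) \<partial>PiM I (\<lambda>i. Est i \<bind> Qd))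
      = ennreal (\<Sum>i\<in>I. \<Sum>l\<in>I. if i = l then 0 else C i + C l + (norm (\<Delta> i - \<Delta> l))\<^sup>2)"
    using law C(1,3) by (intro sum_pairwise_mean_sq_dist_PiM) auto
  also have "\<dots> \<le> ennreal (G * (G - 1) * (4 * (\<omega> * L2 + (1 + \<omega>) * P2 + (1 + \<omega>) * \<sigma>2)) * d2)"
  proof (rule ennreal_leI)
    define S where "S = (\<Sum>i\<in>I. (norm (\<Delta> i))\<^sup>2)"
    have "(\<Sum>i\<in>I. \<Sum>l\<in>I. (norm (\<Delta> i - \<Delta> l))\<^sup>2) = 2 * G * S - 2 * G\<^sup>2 * (norm \<delta>)\<^sup>2"
      using sum_pairwise_norm_diff_sq[of \<Delta> I] unfolding mean S_def G_def
      by (simp add: power_mult_distrib)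
    moreover have "(\<Sum>i\<in>I. C i) \<le> (1 + \<omega>) * (\<Sum>i\<in>I. W i) + \<omega> * S"
    proof -
      have "(\<Sum>i\<in>I. C i) \<le> (\<Sum>i\<in>I. (1 + \<omega>) * W i + \<omega> * (norm (\<Delta> i))\<^sup>2)"
        using C(2) by (rule sum_mono)
      then show ?thesis by (simp add: S_def sum.distrib sum_distrib_left)
    qed
    then have "2 * (G - 1) * (\<Sum>i\<in>I. C i) + 2 * G * S - 2 * G\<^sup>2 * (norm \<delta>)\<^sup>2
        \<le> G * (G - 1) * (4 * (\<omega> * L2 + (1 + \<omega>) * P2 + (1 + \<omega>) * \<sigma>2)) * d2"
      using two SW hess smooth nonneg
      by (intro pairwise_compression_bound_arith) (auto simp: G_def S_def)
    ultimately show "(\<Sum>i\<in>I. \<Sum>l\<in>I. if i = l then 0 else C i + C l + (norm (\<Delta> i - \<Delta> l))\<^sup>2)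
        \<le> G * (G - 1) * (4 * (\<omega> * L2 + (1 + \<omega>) * P2 + (1 + \<omega>) * \<sigma>2)) * d2"
      using sum_offdiag_pairs[OF fin, of "\<lambda>i l. (norm (\<Delta> i - \<Delta> l))\<^sup>2" C]
      unfolding G_def by simp
  qed
  finally show ?thesis unfolding G_def .
qed

lemma nn_integral_le_of_distr_eq_bind:
  assumes \<Phi>: "\<Phi> \<in> M \<rightarrow>\<^sub>M S" and \<Psi>: "\<Psi> \<in> M \<rightarrow>\<^sub>M T"
    and U: "U \<in> borel_measurable S" and h: "h \<in> borel_measurable T"
    and K: "K \<in> T \<rightarrow>\<^sub>M subprob_algebra S"
    and law: "distr M S \<Phi> = distr M T \<Psi> \<bind> K"
    and le: "\<And>t. t \<in> space T \<Longrightarrow> (\<integral>\<^sup>+z. U z \<partial>K t) \<le> h t"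
  shows "(\<integral>\<^sup>+\<omega>. U (\<Phi> \<omega>) \<partial>M) \<le> (\<integral>\<^sup>+\<omega>. h (\<Psi> \<omega>) \<partial>M)"
proof -
  have K': "K \<in> distr M T \<Psi> \<rightarrow>\<^sub>M subprob_algebra S"
    using K by (simp cong: measurable_cong_sets)
  have "(\<integral>\<^sup>+\<omega>. U (\<Phi> \<omega>) \<partial>M) = (\<integral>\<^sup>+z. U z \<partial>distr M S \<Phi>)"
    using \<Phi> U by (simp add: nn_integral_distr)
  also have "\<dots> = (\<integral>\<^sup>+t. \<integral>\<^sup>+z. U z \<partial>K t \<partial>distr M T \<Psi>)"
    unfolding law by (rule nn_integral_bind[OF U K'])
  also have "\<dots> \<le> (\<integral>\<^sup>+t. h t \<partial>distr M T \<Psi>)"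
    using le by (intro nn_integral_mono) simp
  also have "\<dots> = (\<integral>\<^sup>+\<omega>. h (\<Psi> \<omega>) \<partial>M)"
    using \<Psi> h by (simp add: nn_integral_distr)
  finally show ?thesis .
qed

lemma measurable_gradient_step_kernel:
  fixes D :: "'v::euclidean_space \<Rightarrow> 'v \<Rightarrow> 'w::topological_space measure"
  assumes D: "(\<lambda>(y, z). D y z) \<in> borel \<rightarrow>\<^sub>M prob_algebra borel"
    and Q: "Q \<in> borel \<rightarrow>\<^sub>M prob_algebra borel"
  shows "(\<lambda>s. D (fst s - \<gamma> *\<^sub>R snd s) (fst s) \<bind> Q) \<in> borel \<Otimes>\<^sub>M borel \<rightarrow>\<^sub>M prob_algebra borel"
proof (rule measurable_bind_prob_space[OF _ Q])
  have "(\<lambda>s::'v \<times> 'v. (fst s - \<gamma> *\<^sub>R snd s, fst s)) \<in> borel \<Otimes>\<^sub>M borel \<rightarrow>\<^sub>M borel"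
    unfolding borel_prod[symmetric] by measurable
  from measurable_compose[OF this D]
  show "(\<lambda>s. D (fst s - \<gamma> *\<^sub>R snd s) (fst s)) \<in> borel \<Otimes>\<^sub>M borel \<rightarrow>\<^sub>M prob_algebra borel"
    by simp
qed

lemma measurable_bernoulli_PiM_kernel:
  fixes Est :: "'i \<Rightarrow> 'x::topological_space \<times> 'y::topological_space \<Rightarrow> 'v::topological_space measure"
  assumes Est: "\<And>i. i \<in> I \<Longrightarrow> Est i \<in> borel \<Otimes>\<^sub>M borel \<rightarrow>\<^sub>M prob_algebra borel"
  shows "(\<lambda>s. distr (measure_pmf (bernoulli_pmf p) \<Otimes>\<^sub>M PiM I (\<lambda>i. Est i s))
                 (borel \<Otimes>\<^sub>M borel \<Otimes>\<^sub>M count_space UNIV \<Otimes>\<^sub>M PiM I (\<lambda>_. borel))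
                 (\<lambda>(cc, q). (fst s, snd s, cc, q)))
      \<in> borel \<Otimes>\<^sub>M borel \<rightarrow>\<^sub>M subprob_algebra (borel \<Otimes>\<^sub>M borel \<Otimes>\<^sub>M count_space UNIV \<Otimes>\<^sub>M PiM I (\<lambda>_. borel))"
proof (rule measurable_distr2)
  have "measure_pmf (bernoulli_pmf p) \<in> space (subprob_algebra (count_space UNIV))"
    by (simp add: space_subprob_algebra prob_space_imp_subprob_space measure_pmf.prob_space_axioms)
  then show "(\<lambda>s. measure_pmf (bernoulli_pmf p) \<Otimes>\<^sub>M PiM I (\<lambda>i. Est i s))
      \<in> borel \<Otimes>\<^sub>M borel \<rightarrow>\<^sub>M subprob_algebra (count_space UNIV \<Otimes>\<^sub>M PiM I (\<lambda>_. borel))"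
    using measurable_prob_algebraD[OF measurable_PiM_kernel[OF Est]]
    by (intro measurable_pair_measure measurable_const) auto
qed measurable

lemma nn_integral_bernoulli_PiM_kernel:
  fixes U :: "'x::topological_space \<times> 'y::topological_space \<times> bool \<times> ('i \<Rightarrow> 'v::topological_space) \<Rightarrow> ennreal"
  assumes "prob_space P" and sets_P: "sets P = sets (PiM I (\<lambda>_. borel))" and "0 \<le> p" "p \<le> 1"
    and U: "U \<in> borel_measurable (borel \<Otimes>\<^sub>M borel \<Otimes>\<^sub>M count_space UNIV \<Otimes>\<^sub>M PiM I (\<lambda>_. borel))"
  shows "(\<integral>\<^sup>+z. U z \<partial>distr (measure_pmf (bernoulli_pmf p) \<Otimes>\<^sub>M P)
                  (borel \<Otimes>\<^sub>M borel \<Otimes>\<^sub>M count_space UNIV \<Otimes>\<^sub>M PiM I (\<lambda>_. borel))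
                  (\<lambda>(cc, q). (a, b, cc, q)))
       = (\<integral>\<^sup>+q. U (a, b, True, q) \<partial>P) * ennreal p + (\<integral>\<^sup>+q. U (a, b, False, q) \<partial>P) * ennreal (1 - p)"
proof -
  interpret P: prob_space P by fact
  have sets_BP: "sets (measure_pmf (bernoulli_pmf p) \<Otimes>\<^sub>M P)
      = sets (count_space UNIV \<Otimes>\<^sub>M PiM I (\<lambda>_. (borel :: 'v measure)))"
    using sets_P by (intro sets_pair_measure_cong) auto
  have embed: "(\<lambda>(cc, q). (a, b, cc, q)) \<in> measure_pmf (bernoulli_pmf p) \<Otimes>\<^sub>M P
      \<rightarrow>\<^sub>M borel \<Otimes>\<^sub>M borel \<Otimes>\<^sub>M count_space UNIV \<Otimes>\<^sub>M PiM I (\<lambda>_. borel)"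
    unfolding measurable_cong_sets[OF sets_BP refl] by measurable
  have U_ab: "(\<lambda>w. U (a, b, fst w, snd w)) \<in> borel_measurable (measure_pmf (bernoulli_pmf p) \<Otimes>\<^sub>M P)"
    using measurable_compose[OF embed U] by (simp add: split_beta)
  have "(\<integral>\<^sup>+z. U z \<partial>distr (measure_pmf (bernoulli_pmf p) \<Otimes>\<^sub>M P)
                  (borel \<Otimes>\<^sub>M borel \<Otimes>\<^sub>M count_space UNIV \<Otimes>\<^sub>M PiM I (\<lambda>_. borel))
                  (\<lambda>(cc, q). (a, b, cc, q)))
      = (\<integral>\<^sup>+w. U (a, b, fst w, snd w) \<partial>(measure_pmf (bernoulli_pmf p) \<Otimes>\<^sub>M P))"
    by (subst nn_integral_distr[OF embed]) (simp_all add: split_beta U)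
  also have "\<dots> = (\<integral>\<^sup>+cc. \<integral>\<^sup>+q. U (a, b, cc, q) \<partial>P \<partial>measure_pmf (bernoulli_pmf p))"
    using P.nn_integral_fst[OF U_ab] by simp
  finally show ?thesis using \<open>0 \<le> p\<close> \<open>p \<le> 1\<close> by simp
qed

lemma expected_pairwise_sq_dist_le:
  fixes M :: "'a measure" and X Y :: "'a \<Rightarrow> 'v::euclidean_space" and C :: "'a \<Rightarrow> bool"
    and Qv :: "'a \<Rightarrow> 'i \<Rightarrow> 'v" and Gn :: "'i \<Rightarrow> 'a \<Rightarrow> 'v" and grad :: "'i \<Rightarrow> 'v \<Rightarrow> 'v"
    and Est :: "'i \<Rightarrow> 'v \<times> 'v \<Rightarrow> 'v measure" and R V :: "'v \<times> 'v \<Rightarrow> real"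
  assumes "finite I" "0 \<le> p" "p \<le> 1"
    and [measurable]: "X \<in> borel_measurable M" "Y \<in> borel_measurable M"
      "C \<in> M \<rightarrow>\<^sub>M count_space UNIV" "\<And>i. (\<lambda>\<omega>. Qv \<omega> i) \<in> borel_measurable M"
      "\<And>i. Gn i \<in> borel_measurable M"
      "R \<in> borel_measurable (borel \<Otimes>\<^sub>M borel)" "V \<in> borel_measurable (borel \<Otimes>\<^sub>M borel)"
    and Est: "\<And>i. i \<in> I \<Longrightarrow> Est i \<in> borel \<Otimes>\<^sub>M borel \<rightarrow>\<^sub>M prob_algebra borel"
    and step: "\<And>i \<omega>. i \<in> I \<Longrightarrow>
      Gn i \<omega> = (if C \<omega> then grad i (X \<omega> - \<gamma> *\<^sub>R Y \<omega>) else Y \<omega> + Qv \<omega> i)"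
    and fresh: "distr M (borel \<Otimes>\<^sub>M borel \<Otimes>\<^sub>M count_space UNIV \<Otimes>\<^sub>M PiM I (\<lambda>_. borel))
                   (\<lambda>\<omega>. (X \<omega>, Y \<omega>, C \<omega>, restrict (Qv \<omega>) I))
      = distr M (borel \<Otimes>\<^sub>M borel) (\<lambda>\<omega>. (X \<omega>, Y \<omega>)) \<bind>
        (\<lambda>s. distr (measure_pmf (bernoulli_pmf p) \<Otimes>\<^sub>M PiM I (\<lambda>i. Est i s))
                (borel \<Otimes>\<^sub>M borel \<Otimes>\<^sub>M count_space UNIV \<Otimes>\<^sub>M PiM I (\<lambda>_. borel))
                (\<lambda>(cc, q). (fst s, snd s, cc, q)))"
    and R_ge: "\<And>a b. (\<Sum>i\<in>I. \<Sum>l\<in>I. (norm (grad i (a - \<gamma> *\<^sub>R b) - grad l (a - \<gamma> *\<^sub>R b)))\<^sup>2) \<le> R (a, b)"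
    and V_ge: "\<And>s. (\<Sum>i\<in>I. \<Sum>l\<in>I. \<integral>\<^sup>+q. ennreal ((norm (q i - q l))\<^sup>2) \<partial>PiM I (\<lambda>i. Est i s))
                 \<le> ennreal (V s)"
    and V_nonneg: "\<And>s. 0 \<le> V s"
  shows "(\<Sum>i\<in>I. \<Sum>l\<in>I. \<integral>\<^sup>+\<omega>. ennreal ((norm (Gn i \<omega> - Gn l \<omega>))\<^sup>2) \<partial>M)
       \<le> (\<integral>\<^sup>+\<omega>. ennreal (p * R (X \<omega>, Y \<omega>) + (1 - p) * V (X \<omega>, Y \<omega>)) \<partial>M)"
proof -
  define D where "D q = (\<Sum>i\<in>I. \<Sum>l\<in>I. ennreal ((norm (q i - q l))\<^sup>2))" for q :: "'i \<Rightarrow> 'v"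
  define U where "U z = (if fst (snd (snd z)) then ennreal (R (fst z, fst (snd z))) else D (snd (snd (snd z))))"
    for z :: "'v \<times> 'v \<times> bool \<times> ('i \<Rightarrow> 'v)"
  have R_nonneg: "0 \<le> R s" for s
    using R_ge[of "fst s" "snd s", unfolded prod.collapse] by (rule order_trans[rotated]) (simp add: sum_nonneg)
  have [measurable]: "D \<in> borel_measurable (PiM I (\<lambda>_. borel))"
    unfolding D_def by measurable
  have U_meas: "U \<in> borel_measurable (borel \<Otimes>\<^sub>M borel \<Otimes>\<^sub>M count_space UNIV \<Otimes>\<^sub>M PiM I (\<lambda>_. borel))"
    unfolding U_def by measurable
  have step_le: "(\<integral>\<^sup>+z. U z \<partial>distr (measure_pmf (bernoulli_pmf p) \<Otimes>\<^sub>M PiM I (\<lambda>i. Est i s))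
                  (borel \<Otimes>\<^sub>M borel \<Otimes>\<^sub>M count_space UNIV \<Otimes>\<^sub>M PiM I (\<lambda>_. borel))
                  (\<lambda>(cc, q). (fst s, snd s, cc, q)))
        \<le> ennreal (p * R s + (1 - p) * V s)" if "s \<in> space (borel \<Otimes>\<^sub>M borel)" for s
  proof -
    have "PiM I (\<lambda>i. Est i s) \<in> space (prob_algebra (PiM I (\<lambda>_. borel)))"
      using measurable_space[OF measurable_PiM_kernel[OF Est] that] .
    then have P: "prob_space (PiM I (\<lambda>i. Est i s))" "sets (PiM I (\<lambda>i. Est i s)) = sets (PiM I (\<lambda>_. borel))"
      by (simp_all add: space_prob_algebra)
    interpret P: prob_space "PiM I (\<lambda>i. Est i s)" by (fact P(1))
    have "(\<integral>\<^sup>+q. D q \<partial>PiM I (\<lambda>i. Est i s))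
        = (\<Sum>i\<in>I. \<Sum>l\<in>I. \<integral>\<^sup>+q. ennreal ((norm (q i - q l))\<^sup>2) \<partial>PiM I (\<lambda>i. Est i s))"
      unfolding D_def using P(2) by (simp add: nn_integral_sum del: sum_ennreal cong: measurable_cong_sets)
    then have "(\<integral>\<^sup>+z. U z \<partial>distr (measure_pmf (bernoulli_pmf p) \<Otimes>\<^sub>M PiM I (\<lambda>i. Est i s))
                  (borel \<Otimes>\<^sub>M borel \<Otimes>\<^sub>M count_space UNIV \<Otimes>\<^sub>M PiM I (\<lambda>_. borel))
                  (\<lambda>(cc, q). (fst s, snd s, cc, q)))
        = ennreal (R s) * ennreal p
          + (\<Sum>i\<in>I. \<Sum>l\<in>I. \<integral>\<^sup>+q. ennreal ((norm (q i - q l))\<^sup>2) \<partial>PiM I (\<lambda>i. Est i s)) * ennreal (1 - p)"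
      using P U_meas \<open>0 \<le> p\<close> \<open>p \<le> 1\<close>
      by (subst nn_integral_bernoulli_PiM_kernel) (simp_all add: U_def P.emeasure_space_1)
    also have "\<dots> \<le> ennreal (R s) * ennreal p + ennreal (V s) * ennreal (1 - p)"
      using V_ge by (intro add_mono mult_right_mono) auto
    also have "\<dots> = ennreal (p * R s) + ennreal ((1 - p) * V s)"
      using R_nonneg V_nonneg \<open>0 \<le> p\<close> \<open>p \<le> 1\<close> by (simp add: ennreal_mult mult.commute)
    also have "\<dots> = ennreal (p * R s + (1 - p) * V s)"
      using R_nonneg V_nonneg \<open>0 \<le> p\<close> \<open>p \<le> 1\<close> by (intro ennreal_plus[symmetric]) auto
    finally show ?thesis .
  qed
  have "(\<Sum>i\<in>I. \<Sum>l\<in>I. \<integral>\<^sup>+\<omega>. ennreal ((norm (Gn i \<omega> - Gn l \<omega>))\<^sup>2) \<partial>M)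
      = (\<integral>\<^sup>+\<omega>. (\<Sum>i\<in>I. \<Sum>l\<in>I. ennreal ((norm (Gn i \<omega> - Gn l \<omega>))\<^sup>2)) \<partial>M)"
    by (simp add: nn_integral_sum del: sum_ennreal)
  also have "\<dots> \<le> (\<integral>\<^sup>+\<omega>. U (X \<omega>, Y \<omega>, C \<omega>, restrict (Qv \<omega>) I) \<partial>M)"
  proof (rule nn_integral_mono)
    fix \<omega>
    show "(\<Sum>i\<in>I. \<Sum>l\<in>I. ennreal ((norm (Gn i \<omega> - Gn l \<omega>))\<^sup>2)) \<le> U (X \<omega>, Y \<omega>, C \<omega>, restrict (Qv \<omega>) I)"
    proof (cases "C \<omega>")
      case True
      then have "(\<Sum>i\<in>I. \<Sum>l\<in>I. ennreal ((norm (Gn i \<omega> - Gn l \<omega>))\<^sup>2))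
          = ennreal (\<Sum>i\<in>I. \<Sum>l\<in>I. (norm (grad i (X \<omega> - \<gamma> *\<^sub>R Y \<omega>) - grad l (X \<omega> - \<gamma> *\<^sub>R Y \<omega>)))\<^sup>2)"
        by (simp add: step sum_nonneg cong: sum.cong)
      then show ?thesis
        using True R_ge by (simp add: U_def ennreal_leI)
    next
      case False
      then show ?thesis by (simp add: U_def D_def step cong: sum.cong)
    qed
  qed
  also have "\<dots> \<le> (\<integral>\<^sup>+\<omega>. ennreal (p * R (X \<omega>, Y \<omega>) + (1 - p) * V (X \<omega>, Y \<omega>)) \<partial>M)"
    by (rule nn_integral_le_of_distr_eq_bind[OF _ _ U_meas _
          measurable_bernoulli_PiM_kernel[OF Est] fresh step_le]) measurable
  finally show ?thesis .
qed

lemma pairwise_average_bound_arith: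
  fixes g p B L \<zeta> K n d :: real
  assumes "g \<ge> 2" "0 \<le> p" "p \<le> 1" "0 \<le> B" "0 \<le> K" "0 \<le> n" "0 \<le> d"
  shows "1 / (g * (g - 1)) * (p * (2 * g\<^sup>2 * (2 * B * n + 2 * B * L\<^sup>2 * d + \<zeta>\<^sup>2))
                              + (1 - p) * (g * (g - 1) * (4 * K) * d))
       \<le> (8 * B * p * L\<^sup>2 + 4 * (1 - p) * K) * d + 8 * B * p * n + 4 * p * \<zeta>\<^sup>2"
proof -
  define Y where "Y = p * (2 * B * n + 2 * B * L\<^sup>2 * d + \<zeta>\<^sup>2)"
  have "Y \<ge> 0" using assms by (simp add: Y_def)
  have "1 / (g * (g - 1)) * (p * (2 * g\<^sup>2 * (2 * B * n + 2 * B * L\<^sup>2 * d + \<zeta>\<^sup>2))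
                              + (1 - p) * (g * (g - 1) * (4 * K) * d))
      = 2 * g\<^sup>2 / (g * (g - 1)) * Y + 4 * (1 - p) * K * d"
    using assms by (simp add: Y_def field_simps)
  also have "\<dots> \<le> 4 * Y + 4 * (1 - p) * K * d"
  proof -
    have "2 * g\<^sup>2 / (g * (g - 1)) \<le> 4"
      using assms by (simp add: power2_eq_square divide_le_eq algebra_simps)
    from mult_right_mono[OF this \<open>Y \<ge> 0\<close>] show ?thesis by simp
  qed
  also have "\<dots> = (8 * B * p * L\<^sup>2 + 4 * (1 - p) * K) * d + 8 * B * p * n + 4 * p * \<zeta>\<^sup>2"
    by (simp add: Y_def algebra_simps)
  finally show ?thesis .
qed

lemma nn_integral_scaled_le_affine:
  fixes F u v :: "'a \<Rightarrow> real"
  assumes "prob_space M"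
    and X: "X \<le> (\<integral>\<^sup>+\<omega>. ennreal (F \<omega>) \<partial>M)"
    and [measurable]: "F \<in> borel_measurable M" "u \<in> borel_measurable M" "v \<in> borel_measurable M"
    and nonneg: "0 \<le> c" "0 \<le> \<alpha>" "0 \<le> \<beta>" "0 \<le> \<gamma>" "\<And>\<omega>. 0 \<le> u \<omega>" "\<And>\<omega>. 0 \<le> v \<omega>"
    and le: "\<And>\<omega>. c * F \<omega> \<le> \<alpha> * u \<omega> + \<beta> * v \<omega> + \<gamma>"
  shows "ennreal c * X
       \<le> ennreal \<alpha> * (\<integral>\<^sup>+\<omega>. ennreal (u \<omega>) \<partial>M) + ennreal \<beta> * (\<integral>\<^sup>+\<omega>. ennreal (v \<omega>) \<partial>M) + ennreal \<gamma>"
proof -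
  interpret prob_space M by fact
  have "ennreal c * X \<le> ennreal c * (\<integral>\<^sup>+\<omega>. ennreal (F \<omega>) \<partial>M)"
    using X by (rule mult_left_mono) simp
  also have "\<dots> = (\<integral>\<^sup>+\<omega>. ennreal (c * F \<omega>) \<partial>M)"
    using nonneg(1) by (subst nn_integral_cmult[symmetric]) (auto simp: ennreal_mult')
  also have "\<dots> \<le> (\<integral>\<^sup>+\<omega>. ennreal (\<alpha> * u \<omega> + \<beta> * v \<omega> + \<gamma>) \<partial>M)"
    using le by (intro nn_integral_mono ennreal_leI)
  also have "\<dots> = (\<integral>\<^sup>+\<omega>. ennreal \<alpha> * ennreal (u \<omega>) + ennreal \<beta> * ennreal (v \<omega>) + ennreal \<gamma> \<partial>M)"
    using nonneg by (intro nn_integral_cong) (simp add: ennreal_plus ennreal_mult)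
  also have "\<dots> = ennreal \<alpha> * (\<integral>\<^sup>+\<omega>. ennreal (u \<omega>) \<partial>M) + ennreal \<beta> * (\<integral>\<^sup>+\<omega>. ennreal (v \<omega>) \<partial>M) + ennreal \<gamma>"
    by (simp add: nn_integral_add nn_integral_cmult emeasure_space_1)
  finally show ?thesis .
qed

theorem mainTheorem3:
  fixes n m b :: nat
    and Gs :: "nat set"
    and \<delta> L B \<zeta> Lpm cLpm \<omega> \<gamma> p :: real
    and fij :: "nat \<Rightarrow> nat \<Rightarrow> 'v::euclidean_space \<Rightarrow> real"
    and fi :: "nat \<Rightarrow> 'v \<Rightarrow> real"
    and f :: "'v \<Rightarrow> real"
    and Dh :: "nat \<Rightarrow> 'v \<Rightarrow> 'v \<Rightarrow> 'v measure"
    and Qd :: "'v \<Rightarrow> 'v measure"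
    and ARAgg :: "(nat \<Rightarrow> 'v) \<Rightarrow> 'v"
    and M :: "'a measure"
    and x0 :: 'v
    and x g :: "nat \<Rightarrow> 'a \<Rightarrow> 'v"
    and c :: "nat \<Rightarrow> 'a \<Rightarrow> bool"
    and qv :: "nat \<Rightarrow> 'a \<Rightarrow> nat \<Rightarrow> 'v"
    and gi :: "nat \<Rightarrow> nat \<Rightarrow> 'a \<Rightarrow> 'v"
    and k :: nat
  defines "G \<equiv> card Gs"
  assumes workers: "Gs \<subseteq> {1..n}" "G \<ge> 2"
      "0 \<le> \<delta>" "\<delta> < 1/2" "real (card ({1..n} - Gs)) \<le> \<delta> * real n"
    and m_pos: "m \<ge> 1"
    and fij_diff: "\<And>i j y. i \<in> Gs \<Longrightarrow> j \<in> {1..m} \<Longrightarrow> fij i j differentiable (at y)"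
    and fi_def: "\<And>i y. i \<in> Gs \<Longrightarrow> fi i y = (1 / real m) * (\<Sum>j\<in>{1..m}. fij i j y)"
    and f_def: "\<And>y. f y = (1 / real G) * (\<Sum>i\<in>Gs. fi i y)"
    and A1_smooth: "\<And>y z. norm (nabla f y - nabla f z) \<le> L * norm (y - z)"
    and A1_bdd: "bdd_below (range f)"
    and A2: "B \<ge> 0" "\<zeta> \<ge> 0"
      "\<And>y. (1 / real G) * (\<Sum>i\<in>Gs. (norm (nabla (fi i) y - nabla f y))\<^sup>2)
              \<le> B * (norm (nabla f y))\<^sup>2 + \<zeta>\<^sup>2"
    and A3: "Lpm \<ge> 0"
      "\<And>y z. (1 / real G) * (\<Sum>i\<in>Gs. (norm (nabla (fi i) y - nabla (fi i) z))\<^sup>2)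
                 - (norm (nabla f y - nabla f z))\<^sup>2 \<le> Lpm\<^sup>2 * (norm (y - z))\<^sup>2"
    \<comment> \<open>(A4): Dh i y z is the law of the random vector \<Delta>-hat_i(y,z)\<close>
    and A4: "b \<ge> 1" "cLpm \<ge> 0"
      "\<And>i. i \<in> Gs \<Longrightarrow> (\<lambda>(y, z). Dh i y z) \<in> borel \<rightarrow>\<^sub>M prob_algebra borel"
      "\<And>i y z. i \<in> Gs \<Longrightarrow> integrable (Dh i y z) (\<lambda>v. v)"
      "\<And>i y z. i \<in> Gs \<Longrightarrow> (\<integral>v. v \<partial>Dh i y z) = nabla (fi i) y - nabla (fi i) z"
      "\<And>y z. (1 / real G) * (\<Sum>i\<in>Gs. \<integral>\<^sup>+v. ennreal ((norm (v - (nabla (fi i) y - nabla (fi i) z)))\<^sup>2) \<partial>Dh i y z)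
               \<le> ennreal (cLpm\<^sup>2 / real b * (norm (y - z))\<^sup>2)"
    \<comment> \<open>compressor: Qd u is the law of Q(u)\<close>
    and Qcomp: "\<omega> \<ge> 0" "Qd \<in> borel \<rightarrow>\<^sub>M prob_algebra borel"
      "\<And>u. integrable (Qd u) (\<lambda>v. v)"
      "\<And>u. (\<integral>v. v \<partial>Qd u) = u"
      "\<And>u. (\<integral>\<^sup>+v. ennreal ((norm (v - u))\<^sup>2) \<partial>Qd u) \<le> ennreal (\<omega> * (norm u)\<^sup>2)"
    and params: "\<gamma> > 0" "0 < p" "p \<le> 1"
    and probM: "prob_space M"
    and meas: "\<And>j. x j \<in> borel_measurable M" "\<And>j. g j \<in> borel_measurable M"
      "\<And>j. c j \<in> measurable M (count_space UNIV)"
      "\<And>j i. (\<lambda>\<omega>'. qv j \<omega>' i) \<in> borel_measurable M"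
      "\<And>j i. gi j i \<in> borel_measurable M"
    and start: "\<And>\<omega>'. x 0 \<omega>' = x0"
    and step_x: "\<And>j \<omega>'. x (Suc j) \<omega>' = x j \<omega>' - \<gamma> *\<^sub>R g j \<omega>'"
    and step_good: "\<And>j i \<omega>'. i \<in> Gs \<Longrightarrow>
        gi (Suc j) i \<omega>' = (if c j \<omega>' then nabla (fi i) (x (Suc j) \<omega>') else g j \<omega>' + qv j \<omega>' i)"
    and step_agg: "\<And>j \<omega>'. g (Suc j) \<omega>' = ARAgg (\<lambda>i. gi (Suc j) i \<omega>')"
    \<comment> \<open>fresh randomness: given (x^j, g^j), c_j ~ Bernoulli(p) and the compressed estimators
        Q(\<Delta>-hat_i(x^{j+1}, x^j)), i in Gs, are mutually independent with the prescribed laws\<close>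
    and fresh: "\<And>j. distr M (borel \<Otimes>\<^sub>M borel \<Otimes>\<^sub>M count_space UNIV \<Otimes>\<^sub>M PiM Gs (\<lambda>_. borel))
                       (\<lambda>\<omega>'. (x j \<omega>', g j \<omega>', c j \<omega>', restrict (qv j \<omega>') Gs))
        = distr M (borel \<Otimes>\<^sub>M borel) (\<lambda>\<omega>'. (x j \<omega>', g j \<omega>')) \<bind>
          (\<lambda>s. distr (measure_pmf (bernoulli_pmf p) \<Otimes>\<^sub>M
                        PiM Gs (\<lambda>i. Dh i (fst s - \<gamma> *\<^sub>R snd s) (fst s) \<bind> Qd))
                  (borel \<Otimes>\<^sub>M borel \<Otimes>\<^sub>M count_space UNIV \<Otimes>\<^sub>M PiM Gs (\<lambda>_. borel))
                  (\<lambda>(cc, q). (fst s, snd s, cc, q)))"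
  shows "ennreal (1 / (real G * (real G - 1))) *
           (\<Sum>i\<in>Gs. \<Sum>l\<in>Gs. \<integral>\<^sup>+\<omega>'. ennreal ((norm (gi (Suc k) i \<omega>' - gi (Suc k) l \<omega>'))\<^sup>2) \<partial>M)
         \<le> ennreal (8 * B * p * L\<^sup>2 + 4 * (1 - p) * (\<omega> * L\<^sup>2 + (1 + \<omega>) * Lpm\<^sup>2
                                               + (1 + \<omega>) * cLpm\<^sup>2 / real b))
             * (\<integral>\<^sup>+\<omega>'. ennreal ((norm (x (Suc k) \<omega>' - x k \<omega>'))\<^sup>2) \<partial>M)
           + ennreal (8 * B * p) * (\<integral>\<^sup>+\<omega>'. ennreal ((norm (nabla f (x k \<omega>')))\<^sup>2) \<partial>M)
           + ennreal (4 * p * \<zeta>\<^sup>2)"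
proof -
  note meas[measurable]
  have fin: "finite Gs" using workers(1) finite_subset by blast
  have fi_diff: "fi i differentiable (at y)" if "i \<in> Gs" for i y
  proof -
    have "fi i = (\<lambda>y. (1 / real m) * (\<Sum>j\<in>{1..m}. fij i j y))" using fi_def that by auto
    moreover have "(\<lambda>y. \<Sum>j\<in>{1..m}. fij i j y) differentiable (at y)"
      using fij_diff that by (intro differentiable_sum) auto
    ultimately show ?thesis by (simp only: differentiable_mult[OF differentiable_const])
  qed
  have sum_nabla: "(\<Sum>i\<in>Gs. nabla (fi i) y) = real (card Gs) *\<^sub>R nabla f y" for y
    using fi_diff workers(2) f_def unfolding G_def by (intro sum_nabla_average) auto
  have [measurable]: "nabla f \<in> borel_measurable borel"
    using A1_smooth by (rule borel_measurable_lipschitz)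
  have A1_sq: "(norm (nabla f y - nabla f z))\<^sup>2 \<le> L\<^sup>2 * (norm (y - z))\<^sup>2" for y z
    using A1_smooth[of y z] by (metis norm_ge_zero power_mono power_mult_distrib)
  define K where "K = \<omega> * L\<^sup>2 + (1 + \<omega>) * Lpm\<^sup>2 + (1 + \<omega>) * cLpm\<^sup>2 / real b"
  define R where "R s = 2 * (real G)\<^sup>2 * (2 * B * (norm (nabla f (fst s)))\<^sup>2
                          + 2 * B * L\<^sup>2 * (norm (\<gamma> *\<^sub>R snd s))\<^sup>2 + \<zeta>\<^sup>2)" for s :: "'v \<times> 'v"
  define V where "V s = real G * (real G - 1) * (4 * K) * (norm (\<gamma> *\<^sub>R snd s))\<^sup>2" for s :: "'v \<times> 'v"
  have K_nonneg: "0 \<le> K" unfolding K_def using Qcomp(1) by simp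
  have R_ge: "(\<Sum>i\<in>Gs. \<Sum>l\<in>Gs. (norm (nabla (fi i) (a - \<gamma> *\<^sub>R b) - nabla (fi l) (a - \<gamma> *\<^sub>R b)))\<^sup>2)
      \<le> R (a, b)" for a b
    unfolding R_def G_def using workers(2) A2 A1_smooth[of "a - \<gamma> *\<^sub>R b" a]
    by (intro sum_pairwise_heterogeneity_le[OF fin _ sum_nabla]) (auto simp: G_def)
  have V_ge: "(\<Sum>i\<in>Gs. \<Sum>l\<in>Gs. \<integral>\<^sup>+q. ennreal ((norm (q i - q l))\<^sup>2)
                 \<partial>PiM Gs (\<lambda>i. Dh i (fst s - \<gamma> *\<^sub>R snd s) (fst s) \<bind> Qd))
      \<le> ennreal (V s)" for s
  proof -
    define y where "y = fst s - \<gamma> *\<^sub>R snd s"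
    have law: "prob_space (Dh i y (fst s)) \<and> sets (Dh i y (fst s)) = sets borel" if "i \<in> Gs" for i
      using measurable_space[OF A4(3)[OF that], of "(y, fst s)"] by (simp add: space_prob_algebra)
    have "(\<Sum>i\<in>Gs. nabla (fi i) y - nabla (fi i) (fst s)) = real (card Gs) *\<^sub>R (nabla f y - nabla f (fst s))"
      by (simp add: sum_subtractf sum_nabla scaleR_diff_right)
    then have "(\<Sum>i\<in>Gs. \<Sum>l\<in>Gs. \<integral>\<^sup>+q. ennreal ((norm (q i - q l))\<^sup>2) \<partial>PiM Gs (\<lambda>i. Dh i y (fst s) \<bind> Qd))
        \<le> ennreal (real (card Gs) * (real (card Gs) - 1)
             * (4 * (\<omega> * L\<^sup>2 + (1 + \<omega>) * Lpm\<^sup>2 + (1 + \<omega>) * (cLpm\<^sup>2 / real b))) * (norm (y - fst s))\<^sup>2)"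
      using workers(2) law A4(4,5) A4(6)[of y "fst s"] A1_sq A3 Qcomp
      by (intro sum_pairwise_compressed_estimates_le[OF fin])
         (auto simp: G_def mean_sq_dist_def)
    then show ?thesis by (simp add: y_def V_def K_def G_def)
  qed
  have "(\<Sum>i\<in>Gs. \<Sum>l\<in>Gs. \<integral>\<^sup>+\<omega>'. ennreal ((norm (gi (Suc k) i \<omega>' - gi (Suc k) l \<omega>'))\<^sup>2) \<partial>M)
      \<le> (\<integral>\<^sup>+\<omega>'. ennreal (p * R (x k \<omega>', g k \<omega>') + (1 - p) * V (x k \<omega>', g k \<omega>')) \<partial>M)"
  proof (rule expected_pairwise_sq_dist_le[where Est = "\<lambda>i s. Dh i (fst s - \<gamma> *\<^sub>R snd s) (fst s) \<bind> Qd"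
        and grad = "\<lambda>i. nabla (fi i)" and \<gamma> = \<gamma> and R = R and V = V])
    show "R \<in> borel_measurable (borel \<Otimes>\<^sub>M borel)" "V \<in> borel_measurable (borel \<Otimes>\<^sub>M borel)"
      unfolding R_def V_def by measurable
    show "0 \<le> V s" for s
      unfolding V_def using workers(2) K_nonneg by (simp add: G_def)
  qed (use fin params meas measurable_gradient_step_kernel[OF A4(3) Qcomp(2)] fresh[of k] R_ge V_ge
          step_good step_x in \<open>auto simp: R_def V_def\<close>)
  then show ?thesis
    unfolding K_def[symmetric]
  proof (rule nn_integral_scaled_le_affine[OF probM])
    show "(\<lambda>\<omega>'. p * R (x k \<omega>', g k \<omega>') + (1 - p) * V (x k \<omega>', g k \<omega>')) \<in> borel_measurable M"
      "(\<lambda>\<omega>'. (norm (x (Suc k) \<omega>' - x k \<omega>'))\<^sup>2) \<in> borel_measurable M"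
      "(\<lambda>\<omega>'. (norm (nabla f (x k \<omega>')))\<^sup>2) \<in> borel_measurable M"
      unfolding R_def V_def by measurable
    fix \<omega>'
    have "norm (x (Suc k) \<omega>' - x k \<omega>') = norm (\<gamma> *\<^sub>R g k \<omega>')" by (simp add: step_x)
    then show "1 / (real G * (real G - 1)) * (p * R (x k \<omega>', g k \<omega>') + (1 - p) * V (x k \<omega>', g k \<omega>'))
        \<le> (8 * B * p * L\<^sup>2 + 4 * (1 - p) * K) * (norm (x (Suc k) \<omega>' - x k \<omega>'))\<^sup>2
           + 8 * B * p * (norm (nabla f (x k \<omega>')))\<^sup>2 + 4 * p * \<zeta>\<^sup>2"
      using pairwise_average_bound_arith[of "real G" p B K "(norm (nabla f (x k \<omega>')))\<^sup>2"
          "(norm (\<gamma> *\<^sub>R g k \<omega>'))\<^sup>2" L \<zeta>] workers(2) params A2(1) K_nonneg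
      unfolding R_def V_def by simp
  qed (use params A2(1) K_nonneg workers(2) in \<open>auto simp: G_def\<close>)
qed

end
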